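(* Let $n\equiv 0\pmod 4$. Then the set $$\{h,\ x_n,x_{n-1},\ldots,x_{\frac n2+4},x_{\frac n2+3},\ x_{\frac n2+2}x_{\frac n2}\cdots x_6x_4,\ x_{\frac n2+1}x_{\frac n2-1}\cdots x_5x_3\}$$ is a generating set of $\mathcal{AM}_n$ of minimum size. In particular, $\mathcal{AM}_n$ has rank $\frac n2+1$.
   Context: Let $\Omega_n=\{1<2<\cdots<n\}$ and $\mathcal{I}_n$ the monoid of all partial injective maps of $\Omega_n$, written on the right and composed left to right ($x(\alpha\beta)=(x\alpha)\beta$). $\mathcal{AI}_n$ is the set of all $\alpha\in\mathcal{I}_n$ with $\alpha=\sigma|_{\mathrm{Dom}(\alpha)}$ for some even permutation $\sigma$; $\mathcal{PMI}_n$ is the set of monotone (order-preserving or order-reversing) elements and $\mathcal{AM}_n=\mathcal{AI}_n\cap\mathcal{PMI}_n$. The rank of a monoid is the minimum size of a generating set. $h$ is the permutation $i\mapsto n+1-i$. Let $X_i=\Omega_n\setminus\{i\}$. Define $x_1,\dots,x_n$ as the (unique) order-preserving partial permutations with: $x_1$: domain $X_1$, image $X_n$ if $n$ is odd and $X_{n-1}$ if $n$ is even; $x_2$: domain $X_2$, image $X_{n-1}$ if $n$ is odd and $X_n$ if $n$ is even; $x_i$ ($3\leqslant i\leqslant n$): domain $X_i$, image $X_{i-2}$. The list $x_n,\dots,x_{\frac n2+3}$ is empty if $\frac n2+3>n$. *)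

theory Defs
  imports "HOL-Combinatorics.Permutations"
begin

text \<open>Partial maps of the chain 1 < 2 < ... < n are represented as maps
  nat => nat option whose domain is contained in {1..n}.\<close>

definition Omega :: "nat \<Rightarrow> nat set" where
  "Omega n = {1..n}"

definition PI :: "nat \<Rightarrow> (nat \<Rightarrow> nat option) set" where
  "PI n = {a. dom a \<subseteq> Omega n \<and> ran a \<subseteq> Omega n \<and> inj_on a (dom a)}"

text \<open>Composition written on the right: x (a b) = (x a) b.\<close>
definition pcomp :: "(nat \<Rightarrow> nat option) \<Rightarrow> (nat \<Rightarrow> nat option) \<Rightarrow> (nat \<Rightarrow> nat option)" where
  "pcomp a b = (\<lambda>x. case a x of None \<Rightarrow> None | Some y \<Rightarrow> b y)"

definition pid :: "nat \<Rightarrow> (nat \<Rightarrow> nat option)" where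
  "pid n = (\<lambda>x. if x \<in> Omega n then Some x else None)"

definition AI :: "nat \<Rightarrow> (nat \<Rightarrow> nat option) set" where
  "AI n = {a \<in> PI n. \<exists>\<sigma>. \<sigma> permutes Omega n \<and> evenperm \<sigma> \<and>
                          (\<forall>x \<in> dom a. a x = Some (\<sigma> x))}"

definition order_preserving :: "(nat \<Rightarrow> nat option) \<Rightarrow> bool" where
  "order_preserving a = (\<forall>x \<in> dom a. \<forall>y \<in> dom a. x \<le> y \<longrightarrow> the (a x) \<le> the (a y))"

definition order_reversing :: "(nat \<Rightarrow> nat option) \<Rightarrow> bool" where
  "order_reversing a = (\<forall>x \<in> dom a. \<forall>y \<in> dom a. x \<le> y \<longrightarrow> the (a y) \<le> the (a x))"

definition PMI :: "nat \<Rightarrow> (nat \<Rightarrow> nat option) set" where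
  "PMI n = {a \<in> PI n. order_preserving a \<or> order_reversing a}"

definition AM :: "nat \<Rightarrow> (nat \<Rightarrow> nat option) set" where
  "AM n = AI n \<inter> PMI n"

inductive_set gen :: "nat \<Rightarrow> (nat \<Rightarrow> nat option) set \<Rightarrow> (nat \<Rightarrow> nat option) set"
  for n A where
  gen_id: "pid n \<in> gen n A"
| gen_base: "a \<in> A \<Longrightarrow> a \<in> gen n A"
| gen_comp: "a \<in> gen n A \<Longrightarrow> b \<in> gen n A \<Longrightarrow> pcomp a b \<in> gen n A"

definition rank :: "nat \<Rightarrow> (nat \<Rightarrow> nat option) set \<Rightarrow> nat" where
  "rank n M = (LEAST k. \<exists>A. A \<subseteq> M \<and> finite A \<and> card A = k \<and> gen n A = M)"

definition hmap :: "nat \<Rightarrow> (nat \<Rightarrow> nat option)" where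
  "hmap n = (\<lambda>x. if x \<in> Omega n then Some (n + 1 - x) else None)"

text \<open>The unique order-preserving partial permutation with domain
  Omega n - {i} and image Omega n - {j}.\<close>
definition opb :: "nat \<Rightarrow> nat \<Rightarrow> nat \<Rightarrow> (nat \<Rightarrow> nat option)" where
  "opb n i j = (\<lambda>k. if k \<in> Omega n - {i} then
                      (let r = (if k < i then k else k - 1) in Some (if r < j then r else r + 1))
                    else None)"

definition xgen :: "nat \<Rightarrow> nat \<Rightarrow> (nat \<Rightarrow> nat option)" where
  "xgen n i = (if i = 1 then opb n 1 (if odd n then n else n - 1)
               else if i = 2 then opb n 2 (if odd n then n - 1 else n)
               else opb n i (i - 2))"

definition lprod :: "nat \<Rightarrow> (nat \<Rightarrow> nat option) list \<Rightarrow> (nat \<Rightarrow> nat option)" where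
  "lprod n as = foldl pcomp (pid n) as"

end

theory Submission
  imports Defs
begin

(*
  Every element of AM_n is order-preserving or the product of an order-preserving element with h.
  An order-preserving element of rank n - 1 is a map x_ij = opb n i j, and it lies in AM_n iff
  i + j is even, because the permutation extending it is a cycle of length |i - j| + 1.
  Order-preserving elements of smaller rank are products of even maps x_ij: the maps x_(p,p+2)
  push any domain down to an initial segment and back. Since x_ij x_jk = x_ik, all even x_ij are
  generated once the pairs (i, j) given by the generators and their conjugates under h link each
  parity class of Omega_n into a directed cycle; for the given set these cycles are
  2 -> 4 -> ... -> n/2 -> n -> n-2 -> ... -> n/2+2 -> 2 and its odd analogue.
  Conversely, h is the only element of rank n besides the identity, so it lies in every generating
  set, and composing with elements of rank n can only replace the point missing from a domain of
  size n - 1 by its mirror image. So a generating set also contains, for each i <= n/2, an element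
  whose domain misses i or n + 1 - i: at least n/2 + 1 elements in all.
*)

section \<open>Composition of partial maps\<close>

lemma finite_Omega [simp]: "finite (Omega n)"
  by (simp add: Omega_def)

lemma card_Omega [simp]: "card (Omega n) = n"
  by (simp add: Omega_def)

lemma pcomp_assoc: "pcomp (pcomp a b) c = pcomp a (pcomp b c)"
  by (auto simp: pcomp_def fun_eq_iff split: option.splits)

lemma pcomp_eq_Some_iff: "pcomp a b x = Some z \<longleftrightarrow> (\<exists>y. a x = Some y \<and> b y = Some z)"
  by (auto simp: pcomp_def split: option.splits)

lemma dom_pcomp: "dom (pcomp a b) = {x \<in> dom a. the (a x) \<in> dom b}"
  by (auto simp: pcomp_def dom_def split: option.splits)

lemma the_pcomp: "x \<in> dom (pcomp a b) \<Longrightarrow> the (pcomp a b x) = the (b (the (a x)))"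
  by (auto simp: pcomp_def split: option.splits)

lemma ran_eq_image_dom: "ran a = (the \<circ> a) ` dom a"
  by (force simp: ran_def dom_def)

lemma ran_pcomp: "ran (pcomp a b) = (the \<circ> b) ` (ran a \<inter> dom b)"
  by (force simp: ran_def dom_def pcomp_eq_Some_iff)

lemma dom_pcomp_eq: "ran a \<subseteq> dom b \<Longrightarrow> dom (pcomp a b) = dom a"
  by (force simp: dom_pcomp ran_def)

lemma ran_pcomp_eq: "dom b \<subseteq> ran a \<Longrightarrow> ran (pcomp a b) = ran b"
  by (metis ran_pcomp ran_eq_image_dom inf.absorb2)

lemma ran_pcomp_subset: "ran (pcomp a b) \<subseteq> ran b"
  by (auto simp: ran_def pcomp_eq_Some_iff)

lemma pcomp_restrict_Some: "pcomp (Some |` D) a = a |` D"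
  by (auto simp: pcomp_def restrict_map_def)

lemma ran_restrict_Some [simp]: "ran (Some |` D) = D"
  by (auto simp: ran_def restrict_map_def)

lemma pid_eq_restrict_Some: "pid n = Some |` Omega n"
  by (auto simp: pid_def restrict_map_def)

lemma dom_pid [simp]: "dom (pid n) = Omega n"
  by (simp add: pid_eq_restrict_Some)

lemma pcomp_pid_left:
  assumes "dom a \<subseteq> Omega n"
  shows "pcomp (pid n) a = a"
proof
  fix x
  show "pcomp (pid n) a x = a x"
    using assms by (cases "x \<in> Omega n")
      (simp_all add: pid_eq_restrict_Some pcomp_restrict_Some, metis domIff subsetD)
qed

lemma pcomp_pid_right: "ran a \<subseteq> Omega n \<Longrightarrow> pcomp a (pid n) = a"
  by (auto simp: pcomp_def pid_def fun_eq_iff ran_def split: option.splits)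

lemma pcomp_restrict_restrict: "pcomp (Some |` A) (Some |` B) = Some |` (A \<inter> B)"
  by (auto simp: pcomp_restrict_Some Int_commute)

lemma dom_restrict_Some [simp]: "dom (Some |` D) = D"
  by (auto simp: restrict_map_def dom_def)

lemma dom_pcomp_restrict_Some: "D \<subseteq> dom b \<Longrightarrow> dom (pcomp (Some |` D) b) = D"
  by (auto simp: dom_pcomp)

lemma ran_pcomp_restrict_Some: "D \<subseteq> dom b \<Longrightarrow> ran (pcomp (Some |` D) b) = (the \<circ> b) ` D"
  by (simp add: ran_pcomp Int_absorb2)

lemma inj_on_the_comp_iff: "inj_on (the \<circ> a) (dom a) \<longleftrightarrow> inj_on a (dom a)"
  by (force simp: inj_on_def dom_def)

lemma PI_pcomp:
  assumes "a \<in> PI n" "b \<in> PI n"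
  shows "pcomp a b \<in> PI n"
  unfolding PI_def
proof (intro CollectI conjI)
  show "dom (pcomp a b) \<subseteq> Omega n"
    using assms(1) by (auto simp: PI_def dom_pcomp)
  show "ran (pcomp a b) \<subseteq> Omega n"
    using assms(2) ran_pcomp_subset[of a b] by (auto simp: PI_def)
  show "inj_on (pcomp a b) (dom (pcomp a b))"
  proof (rule inj_onI)
    fix x y
    assume "x \<in> dom (pcomp a b)" "y \<in> dom (pcomp a b)" "pcomp a b x = pcomp a b y"
    then obtain u v z where "a x = Some u" "a y = Some v" "b u = Some z" "b v = Some z"
      by (auto simp: pcomp_eq_Some_iff)
    moreover have inj: "inj_on a (dom a)" "inj_on b (dom b)"
      using assms by (simp_all add: PI_def)
    ultimately have "u = v"
      by (intro inj_onD[OF inj(2)]) auto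
    with \<open>a x = Some u\<close> \<open>a y = Some v\<close> show "x = y"
      by (intro inj_onD[OF inj(1)]) auto
  qed
qed

lemma card_ran: "inj_on a (dom a) \<Longrightarrow> card (ran a) = card (dom a)"
  by (metis ran_eq_image_dom card_image inj_on_the_comp_iff)

lemma PI_ran_eq_if_dom_eq:
  assumes "a \<in> PI n" "dom a = Omega n"
  shows "ran a = Omega n"
proof -
  have "card (ran a) = card (dom a)"
    using assms(1) by (intro card_ran) (simp add: PI_def)
  then have "card (ran a) = card (Omega n)"
    using assms(2) by simp
  then show ?thesis
    using assms(1) by (intro card_subset_eq) (auto simp: PI_def)
qed

lemma finite_PI: "finite (PI n)"
proof (rule finite_subset)
  show "PI n \<subseteq> (\<Union>D\<in>Pow (Omega n). {a. dom a = D \<and> ran a \<subseteq> Omega n})"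
    by (auto simp: PI_def)
  show "finite (\<Union>D\<in>Pow (Omega n). {a. dom a = D \<and> ran a \<subseteq> Omega n})"
  proof (rule finite_UN_I)
    fix D
    assume "D \<in> Pow (Omega n)"
    then show "finite {a. dom a = D \<and> ran a \<subseteq> Omega n}"
      by (intro finite_set_of_finite_maps) (auto intro: rev_finite_subset[OF finite_Omega])
  qed simp
qed

abbreviation strict_mono_pmap :: "(nat \<Rightarrow> nat option) \<Rightarrow> bool" where
  "strict_mono_pmap a \<equiv> strict_mono_on (dom a) (the \<circ> a)"

abbreviation strict_antimono_pmap :: "(nat \<Rightarrow> nat option) \<Rightarrow> bool" where
  "strict_antimono_pmap a \<equiv> strict_antimono_on (dom a) (the \<circ> a)"

lemma PMI_iff:
  "a \<in> PMI n \<longleftrightarrow> a \<in> PI n \<and> (strict_mono_pmap a \<or> strict_antimono_pmap a)"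
proof -
  have "order_preserving a \<longleftrightarrow> mono_on (dom a) (the \<circ> a)"
    "order_reversing a \<longleftrightarrow> antimono_on (dom a) (the \<circ> a)"
    by (auto simp: order_preserving_def order_reversing_def monotone_on_def)
  moreover have "inj_on (the \<circ> a) (dom a)" if "a \<in> PI n"
    using that inj_on_the_comp_iff[of a] by (simp add: PI_def)
  ultimately show ?thesis
    unfolding PMI_def
    using strict_mono_iff_mono[of "dom a" "the \<circ> a"] strict_antimono_iff_antimono[of "dom a" "the \<circ> a"]
    by blast
qed

lemma monotone_on_pcomp:
  assumes "monotone_on (dom a) (<) R (the \<circ> a)" "monotone_on (dom b) R Q (the \<circ> b)"
  shows "monotone_on (dom (pcomp a b)) (<) Q (the \<circ> pcomp a b)"
proof (rule monotone_onI)
  fix x y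
  assume "x \<in> dom (pcomp a b)" "y \<in> dom (pcomp a b)" "x < y"
  then have dom: "x \<in> dom a" "y \<in> dom a" "the (a x) \<in> dom b" "the (a y) \<in> dom b"
    by (simp_all add: dom_pcomp)
  have "R ((the \<circ> a) x) ((the \<circ> a) y)"
    using dom \<open>x < y\<close> by (intro monotone_onD[OF assms(1)])
  then have "Q ((the \<circ> b) (the (a x))) ((the \<circ> b) (the (a y)))"
    using dom by (intro monotone_onD[OF assms(2)]) simp_all
  with \<open>x \<in> dom (pcomp a b)\<close> \<open>y \<in> dom (pcomp a b)\<close>
  show "Q ((the \<circ> pcomp a b) x) ((the \<circ> pcomp a b) y)"
    by (simp add: the_pcomp)
qed

lemma monotone_on_converse:
  "monotone_on A P Q f \<Longrightarrow> monotone_on A (\<lambda>x y. P y x) (\<lambda>x y. Q y x) f"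
  unfolding monotone_on_def by blast

lemma strict_mono_pcomp_mono_mono:
  "strict_mono_pmap a \<Longrightarrow> strict_mono_pmap b \<Longrightarrow> strict_mono_pmap (pcomp a b)"
  by (rule monotone_on_pcomp)

lemma strict_mono_pcomp_anti_anti:
  "strict_antimono_pmap a \<Longrightarrow> strict_antimono_pmap b \<Longrightarrow> strict_mono_pmap (pcomp a b)"
  by (erule monotone_on_pcomp) (erule monotone_on_converse)

lemma strict_antimono_pcomp_mono_anti:
  "strict_mono_pmap a \<Longrightarrow> strict_antimono_pmap b \<Longrightarrow> strict_antimono_pmap (pcomp a b)"
  by (rule monotone_on_pcomp)

lemma strict_antimono_pcomp_anti_mono:
  "strict_antimono_pmap a \<Longrightarrow> strict_mono_pmap b \<Longrightarrow> strict_antimono_pmap (pcomp a b)"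
  by (erule monotone_on_pcomp) (erule monotone_on_converse)

lemma strict_mono_restrict_Some: "strict_mono_pmap (Some |` D)"
  unfolding dom_restrict_Some by (rule monotone_onI) simp

lemma PMI_pcomp:
  assumes "a \<in> PMI n" "b \<in> PMI n"
  shows "pcomp a b \<in> PMI n"
proof -
  have "pcomp a b \<in> PI n"
    using assms PI_pcomp by (simp add: PMI_iff)
  moreover have "strict_mono_pmap (pcomp a b) \<or> strict_antimono_pmap (pcomp a b)"
    using assms strict_mono_pcomp_mono_mono strict_mono_pcomp_anti_anti
      strict_antimono_pcomp_mono_anti strict_antimono_pcomp_anti_mono
    unfolding PMI_iff by blast
  ultimately show ?thesis
    by (simp add: PMI_iff)
qed

lemma strict_mono_on_eq_if_image_eq:
  fixes f g :: "'a::linorder \<Rightarrow> 'b::linorder"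
  assumes "finite D" "strict_mono_on D f" "strict_mono_on D g" "f ` D = g ` D" "x \<in> D"
  shows "f x = g x"
proof -
  define L where "L = sorted_list_of_set D"
  have L: "sorted_wrt (<) L" "set L = D"
    using \<open>finite D\<close> by (simp_all add: L_def)
  have sorted_map: "sorted_wrt (<) (map h L)" if "strict_mono_on D h" for h :: "'a \<Rightarrow> 'b"
    unfolding sorted_wrt_map using L that by (auto intro: sorted_wrt_mono_rel dest: strict_mono_onD)
  have "map f L = map g L"
    using sorted_map[OF assms(2)] sorted_map[OF assms(3)] assms(4) L(2)
    by (intro strict_sorted_equal) simp_all
  then show ?thesis
    using L(2) \<open>x \<in> D\<close> by simp
qed

lemma strict_mono_pmap_eqI:
  assumes "strict_mono_pmap a" "strict_mono_pmap b" "dom a = dom b" "ran a = ran b"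
    and "finite (dom a)"
  shows "a = b"
proof
  fix x
  show "a x = b x"
  proof (cases "x \<in> dom a")
    case True
    then have "the (a x) = the (b x)"
      using strict_mono_on_eq_if_image_eq[of "dom a" "the \<circ> a" "the \<circ> b" x] assms
      by (simp add: ran_eq_image_dom)
    with True assms(3) show ?thesis
      by (metis domD option.sel)
  next
    case False
    with assms(3) show ?thesis
      by (metis domIff)
  qed
qed

lemma strict_mono_pmap_full_dom:
  assumes "a \<in> PI n" "strict_mono_pmap a" "dom a = Omega n"
  shows "a = pid n"
proof (rule strict_mono_pmap_eqI)
  show "strict_mono_pmap (pid n)"
    by (auto simp: pid_def monotone_on_def)
  show "ran a = ran (pid n)"
    using PI_ran_eq_if_dom_eq[OF assms(1,3)] by (simp add: pid_eq_restrict_Some)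
qed (use assms in simp_all)

lemma AI_pcomp:
  assumes "a \<in> AI n" "b \<in> AI n"
  shows "pcomp a b \<in> AI n"
proof -
  obtain \<sigma> \<tau> where \<sigma>: "\<sigma> permutes Omega n" "evenperm \<sigma>" "\<forall>x\<in>dom a. a x = Some (\<sigma> x)"
    and \<tau>: "\<tau> permutes Omega n" "evenperm \<tau>" "\<forall>x\<in>dom b. b x = Some (\<tau> x)"
    using assms unfolding AI_def by blast
  have "\<tau> \<circ> \<sigma> permutes Omega n"
    using \<sigma> \<tau> by (simp add: permutes_compose)
  moreover have "evenperm (\<tau> \<circ> \<sigma>)"
    using \<sigma> \<tau> by (simp add: evenperm_comp permutes_imp_permutation[OF finite_Omega])
  moreover have "\<forall>x\<in>dom (pcomp a b). pcomp a b x = Some ((\<tau> \<circ> \<sigma>) x)"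
  proof
    fix x
    assume "x \<in> dom (pcomp a b)"
    then have "x \<in> dom a" "the (a x) \<in> dom b"
      by (simp_all add: dom_pcomp)
    then show "pcomp a b x = Some ((\<tau> \<circ> \<sigma>) x)"
      using \<sigma>(3) \<tau>(3) by (simp add: pcomp_def)
  qed
  moreover have "pcomp a b \<in> PI n"
    using assms PI_pcomp by (auto simp: AI_def)
  ultimately show ?thesis
    unfolding AI_def by blast
qed

lemma AM_pcomp: "a \<in> AM n \<Longrightarrow> b \<in> AM n \<Longrightarrow> pcomp a b \<in> AM n"
  unfolding AM_def using AI_pcomp PMI_pcomp by blast

lemma AM_imp_PI: "a \<in> AM n \<Longrightarrow> a \<in> PI n"
  by (simp add: AM_def AI_def)

lemma pid_AM: "pid n \<in> AM n"
proof -
  have "pid n \<in> PI n" "strict_mono_pmap (pid n)"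
    by (auto simp: PI_def pid_def ran_def inj_on_def monotone_on_def split: if_splits)
  moreover have "\<forall>x\<in>dom (pid n). pid n x = Some (id x)"
    unfolding dom_pid by (simp add: pid_def)
  ultimately show ?thesis
    unfolding AM_def AI_def by (auto simp: PMI_iff intro!: exI[of _ id] permutes_id)
qed

lemma finite_AM: "finite (AM n)"
  by (meson AM_imp_PI finite_PI finite_subset subsetI)

lemma gen_subset:
  assumes "A \<subseteq> M" "pid n \<in> M" "\<And>a b. a \<in> M \<Longrightarrow> b \<in> M \<Longrightarrow> pcomp a b \<in> M"
  shows "gen n A \<subseteq> M"
proof
  fix a
  assume "a \<in> gen n A"
  then show "a \<in> M"
    by induction (use assms in auto)
qed

lemma gen_subset_AM: "A \<subseteq> AM n \<Longrightarrow> gen n A \<subseteq> AM n"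
  using gen_subset[of A "AM n" n] pid_AM AM_pcomp by blast

definition opb_fun :: "nat \<Rightarrow> nat \<Rightarrow> nat \<Rightarrow> nat" where
  "opb_fun i j x = (let r = (if x < i then x else x - 1) in if r < j then r else r + 1)"

lemma opb_eq: "opb n i j x = (if x \<in> Omega n \<and> x \<noteq> i then Some (opb_fun i j x) else None)"
  by (simp add: opb_def opb_fun_def Let_def)

lemma dom_opb: "dom (opb n i j) = Omega n - {i}"
  by (auto simp: opb_eq dom_def split: if_splits)

lemma opb_fun_mem_Omega:
  "i \<in> Omega n \<Longrightarrow> j \<in> Omega n \<Longrightarrow> x \<in> Omega n - {i} \<Longrightarrow> opb_fun i j x \<in> Omega n - {j}"
  by (auto simp: opb_fun_def Let_def Omega_def)

lemma opb_fun_less_iff: "x \<noteq> i \<Longrightarrow> y \<noteq> i \<Longrightarrow> opb_fun i j x < opb_fun i j y \<longleftrightarrow> x < y"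
  by (auto simp: opb_fun_def Let_def)

lemma opb_fun_inj: "x \<noteq> i \<Longrightarrow> y \<noteq> i \<Longrightarrow> opb_fun i j x = opb_fun i j y \<longleftrightarrow> x = y"
  using opb_fun_less_iff[of x i y j] opb_fun_less_iff[of y i x j] by (cases x y rule: linorder_cases) auto

lemma opb_fun_neq: "x \<noteq> i \<Longrightarrow> opb_fun i j x \<noteq> j"
  by (auto simp: opb_fun_def Let_def)

lemma opb_fun_comp: "x \<noteq> i \<Longrightarrow> opb_fun j k (opb_fun i j x) = opb_fun i k x"
  by (auto simp: opb_fun_def Let_def)

lemma opb_fun_same: "x \<noteq> i \<Longrightarrow> opb_fun i i x = x"
  by (auto simp: opb_fun_def Let_def)

lemma opb_fun_inverse: "x \<noteq> i \<Longrightarrow> opb_fun j i (opb_fun i j x) = x"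
  by (simp add: opb_fun_comp opb_fun_same)

lemma ran_opb:
  assumes "i \<in> Omega n" "j \<in> Omega n"
  shows "ran (opb n i j) = Omega n - {j}"
proof -
  have "ran (opb n i j) = (the \<circ> opb n i j) ` (Omega n - {i})"
    by (simp add: ran_eq_image_dom dom_opb)
  also have "\<dots> = opb_fun i j ` (Omega n - {i})"
    by (rule image_cong) (simp_all add: opb_eq)
  also have "\<dots> = Omega n - {j}"
  proof
    show "opb_fun i j ` (Omega n - {i}) \<subseteq> Omega n - {j}"
      using opb_fun_mem_Omega[OF assms] by (simp add: image_subset_iff)
    show "Omega n - {j} \<subseteq> opb_fun i j ` (Omega n - {i})"
    proof
      fix y
      assume y: "y \<in> Omega n - {j}"
      show "y \<in> opb_fun i j ` (Omega n - {i})"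
      proof (rule image_eqI)
        show "y = opb_fun i j (opb_fun j i y)"
          using y opb_fun_inverse[of y j i] by simp
        show "opb_fun j i y \<in> Omega n - {i}"
          using y opb_fun_mem_Omega[OF assms(2,1), of y] by simp
      qed
    qed
  qed
  finally show ?thesis .
qed

lemma opb_PI:
  assumes "i \<in> Omega n" "j \<in> Omega n"
  shows "opb n i j \<in> PI n"
proof -
  have "inj_on (opb n i j) (dom (opb n i j))"
    by (rule inj_onI) (simp add: dom_opb opb_eq opb_fun_inj)
  then show ?thesis
    unfolding PI_def using ran_opb[OF assms] by (simp add: dom_opb)
qed

lemma strict_mono_opb: "strict_mono_pmap (opb n i j)"
  by (rule monotone_onI) (simp add: dom_opb opb_eq opb_fun_less_iff)

lemma opb_comp:
  assumes "i \<in> Omega n" "j \<in> Omega n"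
  shows "pcomp (opb n i j) (opb n j k) = opb n i k"
proof
  fix x
  show "pcomp (opb n i j) (opb n j k) x = opb n i k x"
    using opb_fun_mem_Omega[OF assms, of x] opb_fun_comp[of x i j k]
    by (auto simp: pcomp_def opb_eq)
qed

lemma opb_same: "opb n i i = Some |` (Omega n - {i})"
  by (auto simp: fun_eq_iff opb_eq restrict_map_def opb_fun_same)

lemma opb_conj_hmap:
  assumes "i \<in> Omega n" "j \<in> Omega n"
  shows "pcomp (pcomp (hmap n) (opb n i j)) (hmap n) = opb n (n + 1 - i) (n + 1 - j)"
proof
  fix x
  show "pcomp (pcomp (hmap n) (opb n i j)) (hmap n) x = opb n (n + 1 - i) (n + 1 - j) x"
  proof (cases "x \<in> Omega n \<and> x \<noteq> n + 1 - i")
    case True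
    then have "n + 1 - x \<in> Omega n - {i}"
      using assms by (auto simp: Omega_def)
    moreover have "n + 1 - opb_fun i j (n + 1 - x) = opb_fun (n + 1 - i) (n + 1 - j) x"
      using True assms unfolding opb_fun_def Let_def Omega_def by (simp split: if_split) linarith
    ultimately show ?thesis
      using True opb_fun_mem_Omega[OF assms, of "n + 1 - x"]
      by (simp add: pcomp_def hmap_def opb_eq)
  next
    case False
    then show ?thesis
      using assms by (auto simp: pcomp_def hmap_def opb_eq Omega_def)
  qed
qed

section \<open>Parity of opb n i j and of the reversal h\<close>

(* The permutation extending opb n i j; it is a cycle of length |i - j| + 1. *)
definition opb_perm :: "nat \<Rightarrow> nat \<Rightarrow> nat \<Rightarrow> nat" where
  "opb_perm i j x = (if x = i then j else opb_fun i j x)"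

lemma opb_perm_inverse: "opb_perm j i \<circ> opb_perm i j = id"
  by (auto simp: fun_eq_iff opb_perm_def opb_fun_neq opb_fun_inverse)

lemma opb_perm_permutes:
  assumes "i \<in> Omega n" "j \<in> Omega n"
  shows "opb_perm i j permutes Omega n"
proof (rule bij_imp_permutes)
  have bij: "bij (opb_perm i j)"
    by (rule o_bij[OF opb_perm_inverse[where i = i and j = j] opb_perm_inverse[where i = j and j = i]])
  moreover have "opb_perm i j ` Omega n = Omega n"
  proof -
    have "opb_perm i j ` Omega n = insert j (opb_fun i j ` (Omega n - {i}))"
      using assms by (auto simp: opb_perm_def)
    also have "opb_fun i j ` (Omega n - {i}) = Omega n - {j}"
      using ran_opb[OF assms] by (simp add: ran_eq_image_dom dom_opb opb_eq)
    finally show ?thesis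
      using assms by auto
  qed
  ultimately show "bij_betw (opb_perm i j) (Omega n) (Omega n)"
    using inj_on_subset[OF bij_is_inj[OF bij] subset_UNIV] by (simp add: bij_betw_def)
  show "opb_perm i j x = x" if "x \<notin> Omega n" for x
    using that assms by (auto simp: opb_perm_def opb_fun_def Let_def Omega_def)
qed

lemma opb_perm_same: "opb_perm i i = id"
  by (auto simp: fun_eq_iff opb_perm_def opb_fun_same)

lemma opb_perm_Suc: "i \<le> j \<Longrightarrow> opb_perm i (Suc j) = transpose j (Suc j) \<circ> opb_perm i j"
  by (auto simp: fun_eq_iff opb_perm_def opb_fun_def Let_def transpose_def)

lemma evenperm_opb_perm_le:
  assumes "1 \<le> i" "i \<le> j" "j \<le> n"
  shows "evenperm (opb_perm i j) \<longleftrightarrow> even (i + j)"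
  using assms
proof (induction j)
  case 0
  then show ?case by simp
next
  case (Suc j)
  show ?case
  proof (cases "i = Suc j")
    case True
    then show ?thesis
      by (simp add: opb_perm_same)
  next
    case False
    with Suc.prems have "i \<le> j"
      by simp
    have "permutation (opb_perm i j)"
      using Suc.prems \<open>i \<le> j\<close>
      by (intro permutes_imp_permutation[OF finite_Omega] opb_perm_permutes) (auto simp: Omega_def)
    then have "evenperm (opb_perm i (Suc j)) \<longleftrightarrow> \<not> evenperm (opb_perm i j)"
      by (simp add: opb_perm_Suc[OF \<open>i \<le> j\<close>] evenperm_comp permutation_swap_id evenperm_swap)
    with Suc.IH Suc.prems \<open>i \<le> j\<close> show ?thesis
      by simp
  qed
qed

lemma evenperm_opb_perm:
  assumes "i \<in> Omega n" "j \<in> Omega n"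
  shows "evenperm (opb_perm i j) \<longleftrightarrow> even (i + j)"
proof (cases "i \<le> j")
  case True
  with assms show ?thesis
    by (intro evenperm_opb_perm_le) (auto simp: Omega_def)
next
  case False
  have "inv (opb_perm j i) = opb_perm i j"
    by (rule inv_unique_comp[OF opb_perm_inverse[where i = i and j = j] opb_perm_inverse[where i = j and j = i]])
  moreover have "permutation (opb_perm j i)"
    using assms by (intro permutes_imp_permutation[OF finite_Omega] opb_perm_permutes)
  ultimately have "evenperm (opb_perm i j) \<longleftrightarrow> evenperm (opb_perm j i)"
    by (metis evenperm_inv)
  also have "\<dots> \<longleftrightarrow> even (i + j)"
    using assms False by (subst evenperm_opb_perm_le[of _ _ n]) (auto simp: Omega_def add.commute)
  finally show ?thesis .
qed

lemma opb_AM: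
  assumes "i \<in> Omega n" "j \<in> Omega n" "even (i + j)"
  shows "opb n i j \<in> AM n"
proof -
  have "\<forall>x\<in>dom (opb n i j). opb n i j x = Some (opb_perm i j x)"
    by (simp add: dom_opb opb_eq opb_perm_def)
  then have "opb n i j \<in> AI n"
    unfolding AI_def
    using opb_PI[OF assms(1,2)] opb_perm_permutes[OF assms(1,2)] evenperm_opb_perm[OF assms(1,2)]
      assms(3) by blast
  moreover have "opb n i j \<in> PMI n"
    using opb_PI[OF assms(1,2)] strict_mono_opb by (simp add: PMI_iff)
  ultimately show ?thesis
    by (simp add: AM_def)
qed

definition reverse_interval :: "nat \<Rightarrow> nat \<Rightarrow> nat \<Rightarrow> nat" where
  "reverse_interval a b x = (if a \<le> x \<and> x \<le> b then a + b - x else x)"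

lemma reverse_interval_permutes: "reverse_interval a b permutes {a..b}"
proof (rule bij_imp_permutes)
  have "reverse_interval a b \<circ> reverse_interval a b = id"
    by (auto simp: fun_eq_iff reverse_interval_def)
  then show "bij_betw (reverse_interval a b) {a..b} {a..b}"
    by (intro bij_betw_byWitness[where f' = "reverse_interval a b"])
      (auto simp: fun_eq_iff reverse_interval_def)
qed (auto simp: reverse_interval_def)

lemma evenperm_reverse_interval:
  "evenperm (reverse_interval a (a + k)) \<longleftrightarrow> even ((k + 1) div 2)"
proof (induction k arbitrary: a rule: less_induct)
  case (less k)
  consider "k = 0" | "k = 1" | m where "k = m + 2"
    by (metis One_nat_def add_2_eq_Suc' not0_implies_Suc)
  then show ?case
  proof cases
    case 1
    then have "reverse_interval a (a + k) = id"
      by (auto simp: fun_eq_iff reverse_interval_def)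
    with 1 show ?thesis
      by simp
  next
    case 2
    then have "reverse_interval a (a + k) = transpose a (a + 1)"
      by (auto simp: fun_eq_iff reverse_interval_def transpose_def)
    with 2 show ?thesis
      by (simp add: evenperm_swap)
  next
    case 3
    have decomp: "reverse_interval a (a + k)
        = transpose a (a + k) \<circ> reverse_interval (a + 1) (a + 1 + m)"
      using 3 by (auto simp: fun_eq_iff reverse_interval_def transpose_def)
    have "permutation (reverse_interval (a + 1) (a + 1 + m))"
      using reverse_interval_permutes by (rule permutes_imp_permutation[rotated]) simp
    then have "evenperm (reverse_interval a (a + k))
        \<longleftrightarrow> (evenperm (transpose a (a + k)) \<longleftrightarrow> evenperm (reverse_interval (a + 1) (a + 1 + m)))"
      unfolding decomp by (rule evenperm_comp[OF permutation_swap_id])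
    then show ?thesis
      using less.IH[of m "a + 1"] 3 by (simp add: evenperm_swap)
  qed
qed

lemma dom_hmap [simp]: "dom (hmap n) = Omega n"
  by (auto simp: hmap_def dom_def)

lemma hmap_PI: "hmap n \<in> PI n"
  by (auto simp: PI_def hmap_def Omega_def ran_def dom_def inj_on_def split: if_split_asm)

lemma strict_antimono_hmap: "strict_antimono_pmap (hmap n)"
  by (rule monotone_onI) (auto simp: hmap_def Omega_def)

lemma hmap_AM:
  assumes "0 < n" "even (n div 2)"
  shows "hmap n \<in> AM n"
proof -
  let ?\<sigma> = "reverse_interval 1 (1 + (n - 1))"
  have "?\<sigma> permutes Omega n" "evenperm ?\<sigma>"
    using reverse_interval_permutes[of 1 "1 + (n - 1)"] evenperm_reverse_interval[of 1 "n - 1"] assms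
    by (simp_all add: Omega_def)
  moreover have "\<forall>x\<in>dom (hmap n). hmap n x = Some (?\<sigma> x)"
    unfolding dom_hmap using assms by (auto simp: hmap_def reverse_interval_def Omega_def)
  ultimately have "hmap n \<in> AI n"
    unfolding AI_def using hmap_PI by blast
  moreover have "hmap n \<in> PMI n"
    using hmap_PI strict_antimono_hmap by (simp add: PMI_iff)
  ultimately show ?thesis
    by (simp add: AM_def)
qed

lemma hmap_hmap: "pcomp (hmap n) (hmap n) = pid n"
  by (auto simp: fun_eq_iff pcomp_def hmap_def pid_def Omega_def)

lemma pcomp_hmap_hmap: "ran a \<subseteq> Omega n \<Longrightarrow> pcomp (pcomp a (hmap n)) (hmap n) = a"
  by (simp add: pcomp_assoc hmap_hmap pcomp_pid_right)

lemma subset_Omega_cases: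
  assumes "D \<subseteq> Omega n"
  obtains "D = Omega n" | "card D + 2 \<le> n" | i where "i \<in> Omega n" "D = Omega n - {i}"
proof -
  have "card D \<le> n"
    using card_mono[OF finite_Omega assms] by simp
  then consider "card D = n" | "card D + 1 = n" | "card D + 2 \<le> n"
    by linarith
  then show thesis
  proof cases
    case 1
    then have "D = Omega n"
      using assms by (intro card_subset_eq) simp_all
    then show thesis by (rule that(1))
  next
    case 2
    have "card (Omega n - D) = 1"
      using 2 assms by (simp add: card_Diff_subset rev_finite_subset[OF finite_Omega])
    then obtain i where "Omega n - D = {i}"
      by (rule card_1_singletonE)
    then have "i \<in> Omega n" "D = Omega n - {i}"
      using assms by auto
    then show thesis by (rule that(3))
  next
    case 3
    then show thesis by (rule that(2))
  qed
qed

lemma PMI_full_dom: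
  assumes "a \<in> PMI n" "dom a = Omega n"
  shows "a = pid n \<or> a = hmap n"
proof -
  have PI: "a \<in> PI n"
    using assms(1) by (simp add: PMI_iff)
  consider "strict_mono_pmap a" | "strict_antimono_pmap a"
    using assms(1) by (auto simp: PMI_iff)
  then show ?thesis
  proof cases
    case 1
    then show ?thesis
      using strict_mono_pmap_full_dom PI assms(2) by blast
  next
    case 2
    have ran: "ran a \<subseteq> Omega n"
      using PI by (simp add: PI_def)
    have "pcomp a (hmap n) \<in> PI n"
      using PI hmap_PI by (rule PI_pcomp)
    moreover have "strict_mono_pmap (pcomp a (hmap n))"
      using 2 strict_antimono_hmap by (rule strict_mono_pcomp_anti_anti)
    moreover have "dom (pcomp a (hmap n)) = Omega n"
      using ran assms(2) by (simp add: dom_pcomp_eq)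
    ultimately have "pcomp a (hmap n) = pid n"
      by (rule strict_mono_pmap_full_dom)
    then have "a = pcomp (pid n) (hmap n)"
      using pcomp_hmap_hmap[OF ran] by simp
    then show ?thesis
      by (simp add: pcomp_pid_left)
  qed
qed

lemma permutes_eq_if_eq_except:
  assumes "\<sigma> permutes S" "\<tau> permutes S" "\<And>x. x \<in> S \<Longrightarrow> x \<noteq> i \<Longrightarrow> \<sigma> x = \<tau> x"
  shows "\<sigma> = \<tau>"
proof
  fix x
  consider "x \<notin> S" | "x \<in> S" "x \<noteq> i" | "x \<in> S" "x = i"
    by blast
  then show "\<sigma> x = \<tau> x"
  proof cases
    case 1
    with assms(1,2) show ?thesis
      by (simp add: permutes_not_in)
  next
    case 2
    with assms(3) show ?thesis
      by simp
  next
    case 3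
    define y where "y = inv \<tau> (\<sigma> i)"
    have y: "y \<in> S" "\<tau> y = \<sigma> i"
      using 3 permutes_inverses(1)[OF assms(2)]
      by (simp_all add: y_def permutes_in_image[OF assms(1)] permutes_in_image[OF permutes_inv[OF assms(2)]])
    have "y = i"
    proof (rule ccontr)
      assume "y \<noteq> i"
      then have "\<sigma> y = \<sigma> i"
        using assms(3) y by simp
      with \<open>y \<noteq> i\<close> show False
        using permutes_inj[OF assms(1)] by (simp add: inj_eq)
    qed
    with 3 y show ?thesis
      by simp
  qed
qed

lemma AM_strict_mono_corank1:
  assumes "a \<in> AM n" "strict_mono_pmap a" "i \<in> Omega n" "dom a = Omega n - {i}"
  obtains j where "j \<in> Omega n" "even (i + j)" "a = opb n i j"
proof -
  have PI: "a \<in> PI n"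
    using assms(1) by (rule AM_imp_PI)
  then have ran_sub: "ran a \<subseteq> Omega n"
    by (simp add: PI_def)
  have "card (ran a) = card (dom a)"
    using PI by (intro card_ran) (simp add: PI_def)
  also have "\<dots> = n - 1"
    using assms(3,4) by simp
  finally have "card (Omega n - ran a) = 1"
    using ran_sub assms(3) by (simp add: card_Diff_subset rev_finite_subset[OF finite_Omega] Omega_def)
  then obtain j where "Omega n - ran a = {j}"
    by (rule card_1_singletonE)
  then have j: "j \<in> Omega n" and ran: "ran a = Omega n - {j}"
    using ran_sub by auto
  have a_eq: "a = opb n i j"
    by (rule strict_mono_pmap_eqI[OF assms(2) strict_mono_opb])
      (simp_all add: assms(4) dom_opb ran_opb[OF assms(3) j] ran)
  obtain \<sigma> where \<sigma>: "\<sigma> permutes Omega n" "evenperm \<sigma>" "\<forall>x\<in>dom a. a x = Some (\<sigma> x)"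
    using assms(1) by (auto simp: AM_def AI_def)
  have "\<sigma> = opb_perm i j"
  proof (rule permutes_eq_if_eq_except[OF \<sigma>(1) opb_perm_permutes[OF assms(3) j]])
    fix x
    assume "x \<in> Omega n" "x \<noteq> i"
    then have "a x = Some (\<sigma> x)" "a x = Some (opb_fun i j x)"
      using \<sigma>(3) assms(4) a_eq by (simp_all add: opb_eq)
    with \<open>x \<noteq> i\<close> show "\<sigma> x = opb_perm i j x"
      by (simp add: opb_perm_def)
  qed
  then have "even (i + j)"
    using \<sigma>(2) evenperm_opb_perm[OF assms(3) j] by simp
  with j a_eq show thesis
    using that by blast
qed

section \<open>Submonoids containing the even maps opb n i j\<close>

lemma least_missing_point:
  assumes "A \<subseteq> Omega n" "A \<noteq> Omega n"
  obtains s where "s \<in> Omega n" "s \<notin> A" "\<And>x. 1 \<le> x \<Longrightarrow> x < s \<Longrightarrow> x \<in> A"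
proof -
  have "Omega n - A \<noteq> {}"
    using assms by blast
  define s where "s = Min (Omega n - A)"
  have s: "s \<in> Omega n" "s \<notin> A"
    using Min_in[OF _ \<open>Omega n - A \<noteq> {}\<close>] by (simp_all add: s_def)
  have "x \<in> A" if "1 \<le> x" "x < s" for x
  proof (rule ccontr)
    assume "x \<notin> A"
    with that s(1) have "x \<in> Omega n - A"
      by (simp add: Omega_def)
    then have "s \<le> x"
      by (simp add: s_def)
    with \<open>x < s\<close> show False
      by simp
  qed
  with s show thesis
    by (rule that)
qed

lemma exists_first_gap:
  assumes "A \<subseteq> Omega n" "A \<noteq> Omega n" "A \<noteq> {1..card A}"
  obtains s y where "s \<in> Omega n" "s \<notin> A" "y \<in> A" "s < y"
    "\<And>x. 1 \<le> x \<Longrightarrow> x < s \<Longrightarrow> x \<in> A" "\<And>x. s \<le> x \<Longrightarrow> x < y \<Longrightarrow> x \<notin> A"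
proof -
  have fin: "finite A"
    using assms(1) by (rule rev_finite_subset[OF finite_Omega])
  obtain s where s: "s \<in> Omega n" "s \<notin> A" and below: "\<And>x. 1 \<le> x \<Longrightarrow> x < s \<Longrightarrow> x \<in> A"
    using least_missing_point[OF assms(1,2)] by blast
  have "{a \<in> A. s < a} \<noteq> {}"
  proof
    assume above: "{a \<in> A. s < a} = {}"
    have "A = {1..s - 1}"
    proof
      show "A \<subseteq> {1..s - 1}"
      proof
        fix a
        assume "a \<in> A"
        with above assms(1) s(2) have "a \<in> Omega n" "a < s"
          by (auto simp: not_less_iff_gr_or_eq)
        then show "a \<in> {1..s - 1}"
          by (simp add: Omega_def)
      qed
      show "{1..s - 1} \<subseteq> A"
        using below by auto
    qed
    with assms(3) show False
      by simp
  qed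
  define y where "y = Min {a \<in> A. s < a}"
  have y: "y \<in> A" "s < y"
    using Min_in[OF _ \<open>{a \<in> A. s < a} \<noteq> {}\<close>] fin by (simp_all add: y_def)
  have gap: "x \<notin> A" if "s \<le> x" "x < y" for x
  proof
    assume "x \<in> A"
    with that s(2) have "x \<in> {a \<in> A. s < a}"
      by (cases "x = s") auto
    then have "y \<le> x"
      using fin by (simp add: y_def)
    with \<open>x < y\<close> show False
      by simp
  qed
  from s y below gap show thesis
    by (rule that)
qed

lemma exists_shift_point:
  assumes "A \<subseteq> Omega n" "card A + 2 \<le> n" "A \<noteq> {1..card A}"
  obtains p where "p \<in> Omega n" "p + 2 \<le> n" "p \<notin> A" "p + 1 \<in> A \<or> p + 2 \<in> A"
proof -
  have "A \<noteq> Omega n"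
    using assms(2) by auto
  then obtain s y where s: "s \<in> Omega n" "s \<notin> A" and y: "y \<in> A" "s < y"
    and below: "\<And>x. 1 \<le> x \<Longrightarrow> x < s \<Longrightarrow> x \<in> A" and gap: "\<And>x. s \<le> x \<Longrightarrow> x < y \<Longrightarrow> x \<notin> A"
    using exists_first_gap[OF assms(1) _ assms(3)] by blast
  have fin: "finite A"
    using assms(1) by (rule rev_finite_subset[OF finite_Omega])
  have "y \<le> n"
    using y(1) assms(1) by (auto simp: Omega_def)
  show thesis
  proof (cases "s + 2 \<le> y")
    case True
    define p where "p = y - 2"
    have "y = p + 2" "s \<le> p"
      using True by (simp_all add: p_def)
    then show thesis
      using s(1) \<open>y \<le> n\<close> gap[of p] y(1) by (intro that[of p]) (simp_all add: Omega_def)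
  next
    case False
    with y have y_eq: "y = s + 1"
      by simp
    have "s + 2 \<le> n"
    proof (rule ccontr)
      assume "\<not> s + 2 \<le> n"
      with y_eq \<open>y \<le> n\<close> have "y = n"
        by simp
      have "insert n {1..n - 2} \<subseteq> A"
        using below y y_eq \<open>y = n\<close> by auto
      then have "card (insert n {1..n - 2}) \<le> card A"
        using fin by (rule card_mono[rotated])
      moreover have "card (insert n {1..n - 2}) = n - 1"
        using \<open>y = n\<close> y_eq s(1) by (simp add: Omega_def)
      ultimately show False
        using assms(2) by simp
    qed
    then show thesis
      using s y y_eq by (intro that[of s]) simp_all
  qed
qed

lemma opb_fun_image_subset:
  assumes "i \<in> Omega n" "j \<in> Omega n" "A \<subseteq> Omega n - {i}"
  shows "opb_fun i j ` A \<subseteq> Omega n - {j}"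
proof (rule image_subsetI)
  fix x
  assume "x \<in> A"
  with assms(3) have "x \<in> Omega n - {i}"
    by (rule subsetD)
  then show "opb_fun i j x \<in> Omega n - {j}"
    by (rule opb_fun_mem_Omega[OF assms(1,2)])
qed

lemma inj_on_opb_fun:
  assumes "i \<notin> A"
  shows "inj_on (opb_fun i j) A"
proof (rule inj_onI)
  fix x y
  assume "x \<in> A" "y \<in> A" "opb_fun i j x = opb_fun i j y"
  moreover from assms \<open>x \<in> A\<close> \<open>y \<in> A\<close> have "x \<noteq> i" "y \<noteq> i"
    by auto
  ultimately show "x = y"
    by (simp add: opb_fun_inj)
qed

lemma sum_opb_fun_shift_less:
  assumes "finite A" "p \<notin> A" "p + 1 \<in> A \<or> p + 2 \<in> A"
  shows "\<Sum>(opb_fun p (p + 2) ` A) < \<Sum>A"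
proof -
  have "\<Sum>(opb_fun p (p + 2) ` A) = sum (opb_fun p (p + 2)) A"
    using inj_on_opb_fun[OF assms(2)] by (simp add: sum.reindex)
  also have "\<dots> < sum id A"
  proof (rule sum_strict_mono_ex1[OF assms(1)])
    show "\<forall>x\<in>A. opb_fun p (p + 2) x \<le> id x"
      using assms(2) by (auto simp: opb_fun_def Let_def)
    show "\<exists>x\<in>A. opb_fun p (p + 2) x < id x"
    proof (cases "p + 1 \<in> A")
      case True
      then show ?thesis
        by (intro bexI[of _ "p + 1"]) (simp_all add: opb_fun_def)
    next
      case False
      with assms(3) have "p + 2 \<in> A"
        by simp
      then show ?thesis
        by (intro bexI[of _ "p + 2"]) (simp_all add: opb_fun_def)
    qed
  qed
  finally show ?thesis
    by simp
qed

locale opb_closed =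
  fixes n :: nat and T :: "(nat \<Rightarrow> nat option) set"
  assumes pcomp_mem: "a \<in> T \<Longrightarrow> b \<in> T \<Longrightarrow> pcomp a b \<in> T"
    and opb_mem: "i \<in> Omega n \<Longrightarrow> j \<in> Omega n \<Longrightarrow> even (i + j) \<Longrightarrow> opb n i j \<in> T"
begin

lemma restrict_Some_mem:
  assumes "D \<subseteq> Omega n" "D \<noteq> Omega n"
  shows "Some |` D \<in> T"
  using assms
proof (induction "card (Omega n - D)" arbitrary: D rule: less_induct)
  case less
  obtain p where p: "p \<in> Omega n" "p \<notin> D"
    using less.prems by blast
  have missing_p: "Some |` (Omega n - {p}) \<in> T"
    using opb_mem[OF p(1) p(1)] by (simp add: opb_same)
  show ?case
  proof (cases "insert p D = Omega n")
    case True
    then have "D = Omega n - {p}"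
      using p by auto
    with missing_p show ?thesis
      by simp
  next
    case False
    have "card (Omega n - insert p D) < card (Omega n - D)"
      using p by (intro psubset_card_mono) auto
    then have "Some |` insert p D \<in> T"
      using less.hyps False less.prems p by simp
    with missing_p have "pcomp (Some |` (Omega n - {p})) (Some |` insert p D) \<in> T"
      by (rule pcomp_mem)
    moreover have "(Omega n - {p}) \<inter> insert p D = D"
      using p less.prems by auto
    ultimately show ?thesis
      by (simp add: pcomp_restrict_restrict)
  qed
qed

definition reach :: "nat set \<Rightarrow> nat set \<Rightarrow> bool" where
  "reach A B \<longleftrightarrow> (\<exists>t\<in>T. strict_mono_pmap t \<and> dom t = A \<and> ran t = B)"

lemma reach_trans:
  assumes "reach A B" "reach B C"
  shows "reach A C"
proof -
  obtain t u where t: "t \<in> T" "strict_mono_pmap t" "dom t = A" "ran t = B"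
    and u: "u \<in> T" "strict_mono_pmap u" "dom u = B" "ran u = C"
    using assms unfolding reach_def by blast
  have "dom (pcomp t u) = A" "ran (pcomp t u) = C"
    using t u by (simp_all add: dom_pcomp_eq ran_pcomp_eq)
  then show ?thesis
    unfolding reach_def using pcomp_mem[OF t(1) u(1)] strict_mono_pcomp_mono_mono[OF t(2) u(2)] by blast
qed

lemma reach_refl:
  assumes "A \<subseteq> Omega n" "A \<noteq> Omega n"
  shows "reach A A"
proof -
  have "Some |` A \<in> T"
    using assms by (rule restrict_Some_mem)
  then show ?thesis
    unfolding reach_def using strict_mono_restrict_Some[of A] by (intro bexI[of _ "Some |` A"]) simp_all
qed

lemma reach_restricted_opb:
  assumes "A \<subseteq> Omega n - {i}" "i \<in> Omega n" "j \<in> Omega n" "even (i + j)"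
  shows "reach A (opb_fun i j ` A)"
proof -
  let ?t = "pcomp (Some |` A) (opb n i j)"
  have "?t \<in> T"
    using assms by (intro pcomp_mem restrict_Some_mem opb_mem) auto
  moreover have "strict_mono_pmap ?t"
    by (rule strict_mono_pcomp_mono_mono[OF strict_mono_restrict_Some strict_mono_opb])
  moreover have "dom ?t = A"
    using assms(1) by (simp add: dom_pcomp_restrict_Some dom_opb)
  moreover have "ran ?t = opb_fun i j ` A"
  proof -
    have "ran ?t = (the \<circ> opb n i j) ` A"
      using assms(1) by (simp add: ran_pcomp_restrict_Some dom_opb)
    also have "\<dots> = opb_fun i j ` A"
      by (rule image_cong) (use assms(1) in \<open>auto simp: opb_eq\<close>)
    finally show ?thesis .
  qed
  ultimately show ?thesis
    unfolding reach_def by blast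
qed

lemma reach_shift:
  assumes "A \<subseteq> Omega n - {p}" "p \<in> Omega n" "p + 2 \<le> n"
  shows "reach A (opb_fun p (p + 2) ` A)" "reach (opb_fun p (p + 2) ` A) A"
proof -
  have p2: "p + 2 \<in> Omega n"
    using assms(2,3) by (simp add: Omega_def)
  show "reach A (opb_fun p (p + 2) ` A)"
    using assms(1,2) p2 by (rule reach_restricted_opb) simp
  have "opb_fun p (p + 2) ` A \<subseteq> Omega n - {p + 2}"
    using assms(2) p2 assms(1) by (rule opb_fun_image_subset)
  then have "reach (opb_fun p (p + 2) ` A) (opb_fun (p + 2) p ` opb_fun p (p + 2) ` A)"
    using p2 assms(2) by (rule reach_restricted_opb) simp
  moreover have "opb_fun (p + 2) p ` opb_fun p (p + 2) ` A = id ` A"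
    unfolding image_image
    by (rule image_cong) (use assms(1) opb_fun_inverse[where i = p and j = "p + 2"] in auto)
  ultimately show "reach (opb_fun p (p + 2) ` A) A"
    by simp
qed

lemma reach_shift_down:
  assumes "A \<subseteq> Omega n" "card A + 2 \<le> n" "A \<noteq> {1..card A}"
  obtains A' where "A' \<subseteq> Omega n" "card A' = card A" "\<Sum>A' < \<Sum>A" "reach A A'" "reach A' A"
proof -
  obtain p where p: "p \<in> Omega n" "p + 2 \<le> n" "p \<notin> A" "p + 1 \<in> A \<or> p + 2 \<in> A"
    using exists_shift_point[OF assms] .
  have A: "A \<subseteq> Omega n - {p}"
    using assms(1) p(3) by blast
  have "p + 2 \<in> Omega n"
    using p(1,2) by (simp add: Omega_def)
  then have "opb_fun p (p + 2) ` A \<subseteq> Omega n"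
    using opb_fun_image_subset[OF p(1) _ A] by blast
  moreover have "card (opb_fun p (p + 2) ` A) = card A"
    using inj_on_opb_fun[OF p(3)] by (rule card_image)
  moreover have "\<Sum>(opb_fun p (p + 2) ` A) < \<Sum>A"
    using rev_finite_subset[OF finite_Omega assms(1)] p(3,4) by (rule sum_opb_fun_shift_less)
  ultimately show thesis
    using reach_shift[OF A p(1,2)] by (rule that)
qed

(* Induction on the sums of A and B: each shift moves p + 1 and p + 2 one step down, until both
   sets are the initial segment {1..card A}. *)
lemma reach_if_card_eq:
  assumes "A \<subseteq> Omega n" "B \<subseteq> Omega n" "card A = card B" "card A + 2 \<le> n"
  shows "reach A B"
  using assms
proof (induction "\<Sum>A + \<Sum>B" arbitrary: A B rule: less_induct)
  case less
  consider "A \<noteq> {1..card A}" | "B \<noteq> {1..card B}" | "A = B"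
    using less.prems(3) by fastforce
  then show ?case
  proof cases
    case 1
    then obtain A' where A': "A' \<subseteq> Omega n" "card A' = card A" "\<Sum>A' < \<Sum>A" "reach A A'"
      using reach_shift_down[OF less.prems(1,4)] by blast
    have "reach A' B"
      using A' less.prems by (intro less.hyps) simp_all
    with A'(4) show ?thesis
      by (rule reach_trans)
  next
    case 2
    have "card B + 2 \<le> n"
      using less.prems(3,4) by simp
    then obtain B' where B': "B' \<subseteq> Omega n" "card B' = card B" "\<Sum>B' < \<Sum>B" "reach B' B"
      using reach_shift_down[OF less.prems(2) _ 2] by blast
    have "reach A B'"
      using B' less.prems by (intro less.hyps) simp_all
    then show ?thesis
      using B'(4) by (rule reach_trans)
  next
    case 3
    moreover have "A \<noteq> Omega n"
      using less.prems(4) by auto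
    ultimately show ?thesis
      using less.prems(1) reach_refl by simp
  qed
qed

lemma strict_mono_mem_if_card_le:
  assumes "a \<in> PI n" "strict_mono_pmap a" "card (dom a) + 2 \<le> n"
  shows "a \<in> T"
proof -
  have sub: "dom a \<subseteq> Omega n" "ran a \<subseteq> Omega n" "inj_on a (dom a)"
    using assms(1) by (simp_all add: PI_def)
  have "reach (dom a) (ran a)"
    using sub assms(3) card_ran[OF sub(3)] by (intro reach_if_card_eq) simp_all
  then obtain t where t: "t \<in> T" "strict_mono_pmap t" "dom t = dom a" "ran t = ran a"
    unfolding reach_def by blast
  have "t = a"
    using t(2-4) assms(2) rev_finite_subset[OF finite_Omega sub(1)]
    by (intro strict_mono_pmap_eqI) simp_all
  with t(1) show ?thesis
    by simp
qed

lemma AM_strict_mono_mem: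
  assumes "pid n \<in> T" "a \<in> AM n" "strict_mono_pmap a"
  shows "a \<in> T"
proof -
  have PI: "a \<in> PI n"
    using assms(2) by (rule AM_imp_PI)
  then have "dom a \<subseteq> Omega n"
    by (simp add: PI_def)
  then show ?thesis
  proof (cases rule: subset_Omega_cases)
    case 1
    then show ?thesis
      using strict_mono_pmap_full_dom[OF PI assms(3)] assms(1) by simp
  next
    case 2
    then show ?thesis
      using strict_mono_mem_if_card_le[OF PI assms(3)] by simp
  next
    case (3 i)
    then obtain j where "j \<in> Omega n" "even (i + j)" "a = opb n i j"
      using AM_strict_mono_corank1[OF assms(2,3)] by blast
    then show ?thesis
      using opb_mem \<open>i \<in> Omega n\<close> by simp
  qed
qed

lemma AM_subset:
  assumes "pid n \<in> T" "hmap n \<in> T" "hmap n \<in> AM n"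
  shows "AM n \<subseteq> T"
proof
  fix a
  assume a: "a \<in> AM n"
  consider "strict_mono_pmap a" | "strict_antimono_pmap a"
    using a by (auto simp: AM_def PMI_iff)
  then show "a \<in> T"
  proof cases
    case 1
    with assms(1) a show ?thesis
      by (rule AM_strict_mono_mem)
  next
    case 2
    have "pcomp a (hmap n) \<in> AM n"
      using a assms(3) by (rule AM_pcomp)
    moreover have "strict_mono_pmap (pcomp a (hmap n))"
      using 2 strict_antimono_hmap by (rule strict_mono_pcomp_anti_anti)
    ultimately have "pcomp a (hmap n) \<in> T"
      using assms(1) AM_strict_mono_mem by blast
    then have "pcomp (pcomp a (hmap n)) (hmap n) \<in> T"
      using assms(2) by (rule pcomp_mem)
    moreover have "ran a \<subseteq> Omega n"
      using AM_imp_PI[OF a] by (simp add: PI_def)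
    ultimately show ?thesis
      by (simp add: pcomp_hmap_hmap)
  qed
qed

end

section \<open>Linking the parity classes\<close>

lemma rtranclp_stride2:
  fixes a b x y :: nat
  assumes step: "\<And>k. a \<le> k \<Longrightarrow> k + 2 \<le> b \<Longrightarrow> R k (k + 2)"
    and "a \<le> x" "x \<le> y" "y \<le> b" "even (x + y)"
  shows "R\<^sup>*\<^sup>* x y"
proof -
  obtain d where "y = x + 2 * d"
  proof -
    have "even (y - x)"
      using assms(5) even_diff_nat[of y x] by (simp add: add.commute)
    then obtain d where "y - x = 2 * d"
      by (rule evenE)
    with assms(3) have "y = x + 2 * d"
      by simp
    then show thesis
      by (rule that)
  qed
  with \<open>y \<le> b\<close> show ?thesis
  proof (induction d arbitrary: y)
    case 0
    then show ?case by simp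
  next
    case (Suc d)
    have "R\<^sup>*\<^sup>* x (x + 2 * d)"
      using Suc.prems by (intro Suc.IH) simp_all
    moreover have "R (x + 2 * d) (x + 2 * d + 2)"
      using Suc.prems \<open>a \<le> x\<close> by (intro step) simp_all
    ultimately show ?case
      using Suc.prems(2) by (simp add: rtranclp.rtrancl_into_rtrancl)
  qed
qed

(*
  For r = 2 the edges form the cycle 2 -> 4 -> ... -> m -> n -> n - 2 -> ... -> m + 2 -> 2 through
  the even points; r = 1 gives the odd cycle through 1, m - 1, n - 1 and m + 1.
*)
locale opb_cycles =
  fixes n m :: nat and T :: "(nat \<Rightarrow> nat option) set"
  assumes n_eq: "n = 2 * m" and even_m: "even m" and two_le_m: "2 \<le> m"
    and pcomp_mem: "a \<in> T \<Longrightarrow> b \<in> T \<Longrightarrow> pcomp a b \<in> T"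
    and up_mem: "1 \<le> i \<Longrightarrow> i + 2 \<le> m \<Longrightarrow> opb n i (i + 2) \<in> T"
    and down_mem: "m + 1 \<le> i \<Longrightarrow> i + 2 \<le> n \<Longrightarrow> opb n (i + 2) i \<in> T"
    and cross_up_mem: "r \<in> {1, 2} \<Longrightarrow> opb n (m - 2 + r) (n - 2 + r) \<in> T"
    and cross_down_mem: "r \<in> {1, 2} \<Longrightarrow> opb n (m + r) r \<in> T"
begin

definition edge :: "nat \<Rightarrow> nat \<Rightarrow> bool" where
  "edge i j \<longleftrightarrow> i \<in> Omega n \<and> j \<in> Omega n \<and> opb n i j \<in> T"

lemma edgeI: "i \<in> Omega n \<Longrightarrow> j \<in> Omega n \<Longrightarrow> opb n i j \<in> T \<Longrightarrow> edge i j"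
  by (simp add: edge_def)

lemma transp_edge: "transp edge"
proof (rule transpI)
  fix i j k
  assume "edge i j" "edge j k"
  then have "pcomp (opb n i j) (opb n j k) \<in> T" "i \<in> Omega n" "j \<in> Omega n" "k \<in> Omega n"
    unfolding edge_def by (simp_all add: pcomp_mem)
  then show "edge i k"
    by (simp add: edgeI opb_comp)
qed

lemma lower_path:
  assumes "1 \<le> x" "x \<le> y" "y \<le> m" "even (x + y)"
  shows "edge\<^sup>*\<^sup>* x y"
proof (rule rtranclp_stride2[where a = 1 and b = m])
  fix k
  assume "1 \<le> k" "k + 2 \<le> m"
  then show "edge k (k + 2)"
    using n_eq by (intro edgeI up_mem) (simp_all add: Omega_def)
qed (use assms in auto)

lemma upper_path:
  assumes "m + 1 \<le> y" "y \<le> x" "x \<le> n" "even (x + y)"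
  shows "edge\<^sup>*\<^sup>* x y"
proof -
  have "edge\<inverse>\<inverse>\<^sup>*\<^sup>* y x"
  proof (rule rtranclp_stride2[where a = "m + 1" and b = n])
    fix k
    assume "m + 1 \<le> k" "k + 2 \<le> n"
    then show "edge\<inverse>\<inverse> k (k + 2)"
      unfolding conversep_iff by (intro edgeI down_mem) (simp_all add: Omega_def)
  qed (use assms in \<open>auto simp: add.commute\<close>)
  then show ?thesis
    by (simp add: rtranclp_conversep)
qed

lemma cross_edges:
  assumes "r \<in> {1, 2}"
  shows "edge (m - 2 + r) (n - 2 + r)" "edge (m + r) r"
proof -
  have "r = 1 \<or> r = 2" "1 \<le> m - 2 + r" "m - 2 + r \<le> n" "1 \<le> n - 2 + r" "n - 2 + r \<le> n"
    "m + r \<le> n"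
    using assms two_le_m n_eq by auto
  then show "edge (m - 2 + r) (n - 2 + r)" "edge (m + r) r"
    using cross_up_mem[OF assms] cross_down_mem[OF assms] by (auto intro!: edgeI simp: Omega_def)
qed

lemma tranclp_edge_to_base:
  assumes "r \<in> {1, 2}" "x \<in> Omega n" "even (x + r)"
  shows "edge\<^sup>+\<^sup>+ x r"
proof -
  have r: "r = 1 \<or> r = 2" and x: "1 \<le> x" "x \<le> n"
    using assms(1,2) by (simp_all add: Omega_def)
  have "edge\<^sup>*\<^sup>* (n - 2 + r) (m + r)"
    using r two_le_m even_m n_eq by (intro upper_path) auto
  then have "edge\<^sup>+\<^sup>+ (m - 2 + r) (m + r)"
    using cross_edges(1)[OF assms(1)] by (rule rtranclp_into_tranclp2[rotated])
  then have cycle: "edge\<^sup>+\<^sup>+ (m - 2 + r) r"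
    using cross_edges(2)[OF assms(1)] by (rule tranclp.trancl_into_trancl)
  show ?thesis
  proof (cases "x \<le> m")
    case True
    have "edge\<^sup>*\<^sup>* x (m - 2 + r)"
      using True x r even_m assms(3) by (intro lower_path) presburger+
    then show ?thesis
      using cycle by (rule rtranclp_tranclp_tranclp)
  next
    case False
    have "edge\<^sup>*\<^sup>* x (m + r)"
      using False x r even_m assms(3) by (intro upper_path) presburger+
    then show ?thesis
      using cross_edges(2)[OF assms(1)] by (rule rtranclp_into_tranclp1)
  qed
qed

lemma rtranclp_edge_from_base:
  assumes "r \<in> {1, 2}" "y \<in> Omega n" "even (y + r)"
  shows "edge\<^sup>*\<^sup>* r y"
proof -
  have r: "r = 1 \<or> r = 2" and y: "1 \<le> y" "y \<le> n"
    using assms(1,2) by (simp_all add: Omega_def)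
  show ?thesis
  proof (cases "y \<le> m")
    case True
    then show ?thesis
      using y r even_m assms(3) by (intro lower_path) presburger+
  next
    case False
    have "edge\<^sup>*\<^sup>* r (m - 2 + r)"
      using r even_m two_le_m by (intro lower_path) presburger+
    moreover have "edge\<^sup>*\<^sup>* (n - 2 + r) y"
      using False y r even_m assms(3) n_eq by (intro upper_path) presburger+
    ultimately show ?thesis
      using cross_edges(1)[OF assms(1)] by (blast intro: rtranclp.rtrancl_into_rtrancl rtranclp_trans)
  qed
qed

lemma edge_if_same_parity:
  assumes "r \<in> {1, 2}" "x \<in> Omega n" "y \<in> Omega n" "even (x + r)" "even (y + r)"
  shows "edge x y"
proof -
  have "edge\<^sup>+\<^sup>+ x y"
    using tranclp_edge_to_base[OF assms(1,2,4)] rtranclp_edge_from_base[OF assms(1,3,5)]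
    by (rule tranclp_rtranclp_tranclp)
  then show ?thesis
    using transp_edge by (simp add: tranclp_ident_if_transp)
qed

lemma opb_mem:
  assumes "i \<in> Omega n" "j \<in> Omega n" "even (i + j)"
  shows "opb n i j \<in> T"
proof -
  have "edge i j"
    using assms by (intro edge_if_same_parity[where r = "if even i then 2 else 1"]) auto
  then show ?thesis
    by (simp add: edge_def)
qed

sublocale opb_closed n T
  by unfold_locales (simp_all add: pcomp_mem opb_mem)

end

definition generators :: "nat \<Rightarrow> (nat \<Rightarrow> nat option) set" where
  "generators n = {hmap n, opb n (n div 2 + 2) 2, opb n (n div 2 + 1) 1}
     \<union> (\<lambda>i. opb n i (i - 2)) ` {n div 2 + 3..n}"

lemma foldl_pcomp: "foldl pcomp (pcomp a b) xs = pcomp a (foldl pcomp b xs)"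
  by (induction xs arbitrary: b) (simp_all add: pcomp_assoc)

lemma lprod_Cons:
  assumes "x \<in> PI n"
  shows "lprod n (x # xs) = pcomp x (lprod n xs)"
proof -
  have "pcomp (pid n) x = pcomp x (pid n)"
    using assms by (simp add: PI_def pcomp_pid_left pcomp_pid_right)
  then show ?thesis
    by (simp add: lprod_def foldl_pcomp)
qed

lemma lprod_opb_chain:
  assumes "1 \<le> c" "c + 2 * k \<le> n" "1 \<le> k"
  shows "lprod n (map (\<lambda>j. opb n (c + 2 * j) (c + 2 * j - 2)) (rev [1..<k + 1])) = opb n (c + 2 * k) c"
  using assms
proof (induction k)
  case 0
  then show ?case by simp
next
  case (Suc k)
  have O: "c + 2 * k + 2 \<in> Omega n" "c + 2 * k \<in> Omega n" "c \<in> Omega n"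
    using Suc.prems by (simp_all add: Omega_def)
  have "lprod n (map (\<lambda>j. opb n (c + 2 * j) (c + 2 * j - 2)) (rev [1..<Suc k + 1]))
      = pcomp (opb n (c + 2 * k + 2) (c + 2 * k))
          (lprod n (map (\<lambda>j. opb n (c + 2 * j) (c + 2 * j - 2)) (rev [1..<k + 1])))"
    using opb_PI[OF O(1,2)] by (simp add: lprod_Cons)
  also have "\<dots> = opb n (c + 2 * Suc k) c"
  proof (cases "k = 0")
    case True
    then show ?thesis
      using opb_PI[OF O(1,2)] by (simp add: lprod_def pcomp_pid_right PI_def)
  next
    case False
    then show ?thesis
      using Suc opb_comp[OF O(1,2)] by simp
  qed
  finally show ?case .
qed

lemma lprod_xgen_even_chain:
  assumes "1 \<le> q" "2 * q + 2 \<le> n"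
  shows "lprod n (map (\<lambda>j. xgen n (2 * j)) (rev [2..<q + 2])) = opb n (2 * q + 2) 2"
proof -
  have "[2..<q + 2] = map Suc [1..<q + 1]"
    by (simp add: map_Suc_upt numeral_2_eq_2)
  then have "map (\<lambda>j. xgen n (2 * j)) (rev [2..<q + 2])
      = map (\<lambda>j. xgen n (2 * Suc j)) (rev [1..<q + 1])"
    by (simp only: rev_map map_map comp_def)
  also have "\<dots> = map (\<lambda>j. opb n (2 + 2 * j) (2 + 2 * j - 2)) (rev [1..<q + 1])"
    by (rule map_cong) (auto simp: xgen_def)
  finally have "lprod n (map (\<lambda>j. xgen n (2 * j)) (rev [2..<q + 2]))
      = lprod n (map (\<lambda>j. opb n (2 + 2 * j) (2 + 2 * j - 2)) (rev [1..<q + 1]))"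
    by (rule arg_cong)
  also have "\<dots> = opb n (2 + 2 * q) 2"
    using assms by (intro lprod_opb_chain) simp_all
  finally show ?thesis
    by (simp add: add.commute)
qed

lemma lprod_xgen_odd_chain:
  assumes "1 \<le> q" "2 * q + 1 \<le> n"
  shows "lprod n (map (\<lambda>j. xgen n (2 * j + 1)) (rev [1..<q + 1])) = opb n (2 * q + 1) 1"
proof -
  have "map (\<lambda>j. xgen n (2 * j + 1)) (rev [1..<q + 1])
      = map (\<lambda>j. opb n (1 + 2 * j) (1 + 2 * j - 2)) (rev [1..<q + 1])"
    by (rule map_cong) (auto simp: xgen_def)
  then have "lprod n (map (\<lambda>j. xgen n (2 * j + 1)) (rev [1..<q + 1]))
      = lprod n (map (\<lambda>j. opb n (1 + 2 * j) (1 + 2 * j - 2)) (rev [1..<q + 1]))"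
    by (rule arg_cong)
  also have "\<dots> = opb n (1 + 2 * q) 1"
    using assms by (intro lprod_opb_chain) simp_all
  finally show ?thesis
    by (simp add: add.commute)
qed

lemma generators_eq:
  assumes "n mod 4 = 0" "0 < n"
  shows "{hmap n} \<union> {xgen n i | i. n div 2 + 3 \<le> i \<and> i \<le> n}
      \<union> {lprod n (map (\<lambda>j. xgen n (2 * j)) (rev [2..<n div 4 + 2])),
         lprod n (map (\<lambda>j. xgen n (2 * j + 1)) (rev [1..<n div 4 + 1]))} = generators n"
proof -
  have q: "1 \<le> n div 4" "n div 2 = 2 * (n div 4)" "2 * (n div 4) + 2 \<le> n"
    using assms by auto
  have "{xgen n i | i. n div 2 + 3 \<le> i \<and> i \<le> n} = xgen n ` {n div 2 + 3..n}"
    by auto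
  also have "\<dots> = (\<lambda>i. opb n i (i - 2)) ` {n div 2 + 3..n}"
    by (rule image_cong) (simp_all add: xgen_def)
  finally show ?thesis
    using lprod_xgen_even_chain[OF q(1,3)] lprod_xgen_odd_chain[of "n div 4" n] q
    by (auto simp: generators_def)
qed

lemma generators_subset_AM:
  assumes "n mod 4 = 0" "0 < n"
  shows "generators n \<subseteq> AM n"
proof -
  have "opb n i (i - 2) \<in> AM n" if "i \<in> {n div 2 + 3..n}" for i
    using that by (intro opb_AM) (auto simp: Omega_def)
  moreover have "opb n (n div 2 + 2) 2 \<in> AM n" "opb n (n div 2 + 1) 1 \<in> AM n"
    using assms by (auto intro!: opb_AM simp: Omega_def)
  moreover have "hmap n \<in> AM n"
    using assms by (intro hmap_AM) auto
  ultimately show ?thesis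
    unfolding generators_def by blast
qed

lemma opb_down_mem_generators:
  assumes "n div 2 + 1 \<le> i" "i + 2 \<le> n"
  shows "opb n (i + 2) i \<in> generators n"
proof -
  have "opb n (i + 2) i = opb n (i + 2) (i + 2 - 2)"
    by simp
  with assms show ?thesis
    unfolding generators_def by (intro UnI2 image_eqI[where x = "i + 2"]) auto
qed

lemma gen_opb_conj_mem:
  assumes "hmap n \<in> A" "i \<in> Omega n" "j \<in> Omega n" "opb n i j \<in> gen n A"
  shows "opb n (n + 1 - i) (n + 1 - j) \<in> gen n A"
proof -
  have "pcomp (pcomp (hmap n) (opb n i j)) (hmap n) \<in> gen n A"
    using gen.gen_comp[OF gen.gen_comp[OF gen.gen_base[OF assms(1)] assms(4)] gen.gen_base[OF assms(1)]] .
  then show ?thesis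
    using opb_conj_hmap[OF assms(2,3)] by simp
qed

(* The steps i -> i + 2 below m and the jumps m - 2 + r -> n - 2 + r are h-conjugates of generators. *)
lemma opb_cycles_generators:
  assumes "n mod 4 = 0" "0 < n"
  shows "opb_cycles n (n div 2) (gen n (generators n))"
proof -
  let ?m = "n div 2" and ?T = "gen n (generators n)"
  have m: "n = 2 * ?m" "even ?m" "2 \<le> ?m"
    using assms by auto
  have down: "opb n (i + 2) i \<in> ?T" if "?m + 1 \<le> i" "i + 2 \<le> n" for i
    using that by (intro gen.gen_base opb_down_mem_generators) simp_all
  have cross_down: "opb n (?m + r) r \<in> ?T" if "r \<in> {1, 2}" for r
    using that by (auto intro: gen.gen_base simp: generators_def)
  have conj: "opb n (n + 1 - i) (n + 1 - j) \<in> ?T" if "i \<in> Omega n" "j \<in> Omega n" "opb n i j \<in> ?T" for i j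
    using that by (intro gen_opb_conj_mem) (simp_all add: generators_def)
  show ?thesis
  proof unfold_locales
    show "n = 2 * ?m" "even ?m" "2 \<le> ?m"
      by (fact m)+
    show "pcomp a b \<in> ?T" if "a \<in> ?T" "b \<in> ?T" for a b
      using that by (rule gen.gen_comp)
    show "opb n (i + 2) i \<in> ?T" if "?m + 1 \<le> i" "i + 2 \<le> n" for i
      using that by (rule down)
    show "opb n (?m + r) r \<in> ?T" if "r \<in> {1, 2}" for r
      using that by (rule cross_down)
    show "opb n i (i + 2) \<in> ?T" if "1 \<le> i" "i + 2 \<le> ?m" for i
    proof -
      have "opb n (n - 1 - i + 2) (n - 1 - i) \<in> ?T"
        using that m by (intro down) auto
      then have "opb n (n + 1 - (n - 1 - i + 2)) (n + 1 - (n - 1 - i)) \<in> ?T"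
        using that m by (intro conj) (auto simp: Omega_def)
      moreover have "n + 1 - (n - 1 - i + 2) = i" "n + 1 - (n - 1 - i) = i + 2"
        using that m by auto
      ultimately show ?thesis
        by simp
    qed
    show "opb n (?m - 2 + r) (n - 2 + r) \<in> ?T" if "r \<in> {1, 2}" for r
    proof -
      have "opb n (?m + (3 - r)) (3 - r) \<in> ?T"
        using that by (intro cross_down) auto
      then have "opb n (n + 1 - (?m + (3 - r))) (n + 1 - (3 - r)) \<in> ?T"
        using that m by (intro conj) (auto simp: Omega_def)
      moreover have "n + 1 - (?m + (3 - r)) = ?m - 2 + r" "n + 1 - (3 - r) = n - 2 + r"
        using that m by auto
      ultimately show ?thesis
        by (simp only:)
    qed
  qed
qed

lemma gen_generators:
  assumes "n mod 4 = 0" "0 < n"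
  shows "gen n (generators n) = AM n"
proof
  show "gen n (generators n) \<subseteq> AM n"
    using generators_subset_AM[OF assms] by (rule gen_subset_AM)
  interpret opb_cycles n "n div 2" "gen n (generators n)"
    using assms by (rule opb_cycles_generators)
  show "AM n \<subseteq> gen n (generators n)"
    using assms by (intro AM_subset hmap_AM gen.gen_id gen.gen_base) (auto simp: generators_def)
qed

lemma Omega_minus_eq_iff: "i \<in> Omega n \<Longrightarrow> j \<in> Omega n \<Longrightarrow> Omega n - {i} = Omega n - {j} \<longleftrightarrow> i = j"
  by auto

lemma card_generators:
  assumes "n mod 4 = 0" "0 < n"
  shows "card (generators n) = n div 2 + 1"
proof -
  let ?m = "n div 2"
  let ?D = "(\<lambda>i. opb n i (i - 2)) ` {?m + 3..n}"
  have m: "n = 2 * ?m" "2 \<le> ?m"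
    using assms by auto
  have opb_eqD: "i = k" if "opb n i j = opb n k l" "i \<in> Omega n" "k \<in> Omega n" for i j k l
  proof -
    have "Omega n - {i} = Omega n - {k}"
      using arg_cong[OF that(1), of dom] by (simp add: dom_opb)
    then show ?thesis
      using Omega_minus_eq_iff[OF that(2,3)] by simp
  qed
  have hmap_neq: "hmap n \<noteq> opb n i j" if "1 \<le> i" "i \<le> n" for i j
  proof
    assume "hmap n = opb n i j"
    then have "i \<in> Omega n - {i}"
      using that dom_hmap[of n] dom_opb[of n i j] by (simp add: Omega_def)
    then show False
      by simp
  qed
  have "inj_on (\<lambda>i. opb n i (i - 2)) {?m + 3..n}"
    by (rule inj_onI) (erule opb_eqD; auto simp: Omega_def)
  then have "card ?D = ?m - 2"
    using m by (simp add: card_image)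
  moreover have "opb n (?m + 2) 2 \<notin> ?D" "opb n (?m + 1) 1 \<notin> insert (opb n (?m + 2) 2) ?D"
    using m by (auto dest!: opb_eqD simp: Omega_def)
  moreover have "hmap n \<notin> insert (opb n (?m + 1) 1) (insert (opb n (?m + 2) 2) ?D)"
    using m by (auto simp: hmap_neq)
  ultimately show ?thesis
    using m by (simp add: generators_def insert_commute)
qed

section \<open>Minimality\<close>

lemma gen_subset_PMI: "A \<subseteq> PMI n \<Longrightarrow> gen n A \<subseteq> PMI n"
  using gen_subset[of A "PMI n" n] pid_AM PMI_pcomp by (auto simp: AM_def)

lemma gen_full_dom:
  assumes "A \<subseteq> PMI n" "b \<in> gen n A" "dom b = Omega n"
  shows "b = pid n \<or> hmap n \<in> A"
  using assms(2,3)
proof (induction rule: gen.induct)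
  case gen_id
  then show ?case by simp
next
  case (gen_base a)
  then show ?case
    using assms(1) PMI_full_dom by blast
next
  case (gen_comp a c)
  have PI: "a \<in> PI n" "c \<in> PI n"
    using gen_comp.hyps gen_subset_PMI[OF assms(1)] by (auto simp: PMI_iff)
  have dom_a: "dom a = Omega n"
    using gen_comp.prems PI(1) by (auto simp: dom_pcomp PI_def)
  have "Omega n = (the \<circ> a) ` dom a"
    using PI_ran_eq_if_dom_eq[OF PI(1) dom_a] by (simp add: ran_eq_image_dom)
  also have "\<dots> \<subseteq> dom c"
    using gen_comp.prems dom_a by (auto simp: dom_pcomp)
  finally have dom_c: "dom c = Omega n"
    using PI(2) by (auto simp: PI_def)
  have "pcomp (pid n) (pid n) = pid n"
    by (simp add: pcomp_pid_left)
  then show ?case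
    using gen_comp.IH dom_a dom_c by auto
qed

lemma dom_pcomp_hmap: "dom (pcomp (hmap n) c) = {x \<in> Omega n. n + 1 - x \<in> dom c}"
  unfolding dom_pcomp by (auto simp: hmap_def split: if_split_asm)

lemma dom_eq_if_dom_pcomp_hmap:
  assumes "dom c \<subseteq> Omega n" "i \<in> Omega n" "dom (pcomp (hmap n) c) = Omega n - {i}"
  shows "dom c = Omega n - {n + 1 - i}"
proof
  show "dom c \<subseteq> Omega n - {n + 1 - i}"
  proof
    fix y
    assume y: "y \<in> dom c"
    with assms(1) have "y \<in> Omega n" "n + 1 - (n + 1 - y) = y"
      by (auto simp: Omega_def)
    moreover have "y \<noteq> n + 1 - i"
    proof
      assume "y = n + 1 - i"
      with y assms(2) have "i \<in> dom (pcomp (hmap n) c)"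
        by (auto simp: dom_pcomp_hmap Omega_def)
      with assms(3) show False
        by simp
    qed
    ultimately show "y \<in> Omega n - {n + 1 - i}"
      by simp
  qed
  show "Omega n - {n + 1 - i} \<subseteq> dom c"
  proof
    fix y
    assume y: "y \<in> Omega n - {n + 1 - i}"
    with assms(2) have "n + 1 - y \<in> Omega n - {i}"
      by (auto simp: Omega_def)
    with assms(3) have "n + 1 - y \<in> dom (pcomp (hmap n) c)"
      by simp
    moreover have "n + 1 - (n + 1 - y) = y"
      using y by (simp add: Omega_def)
    ultimately show "y \<in> dom c"
      by (simp add: dom_pcomp_hmap)
  qed
qed

lemma gen_corank1_dom:
  assumes "A \<subseteq> PMI n" "b \<in> gen n A" "i \<in> Omega n" "dom b = Omega n - {i}"
  shows "\<exists>a\<in>A. dom a = Omega n - {i} \<or> dom a = Omega n - {n + 1 - i}"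
  using assms(2-4)
proof (induction arbitrary: i rule: gen.induct)
  case gen_id
  then show ?case by auto
next
  case (gen_base a)
  then show ?case by blast
next
  case (gen_comp a c)
  have PMI: "a \<in> PMI n" "c \<in> PMI n"
    using gen_comp.hyps gen_subset_PMI[OF assms(1)] by auto
  then have dom_sub: "dom a \<subseteq> Omega n" "dom c \<subseteq> Omega n"
    by (simp_all add: PMI_iff PI_def)
  have "Omega n - {i} \<subseteq> dom a"
    using gen_comp.prems(2) by (auto simp: dom_pcomp)
  with dom_sub(1) have "dom a = Omega n - {i} \<or> dom a = Omega n"
    by blast
  then show ?case
  proof
    assume "dom a = Omega n - {i}"
    then show ?case
      using gen_comp.IH(1) gen_comp.prems(1) by blast
  next
    assume "dom a = Omega n"
    with PMI(1) have "a = pid n \<or> a = hmap n"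
      by (rule PMI_full_dom)
    then show ?case
    proof
      assume "a = pid n"
      then show ?case
        using gen_comp.IH(2) gen_comp.prems pcomp_pid_left[OF dom_sub(2)] by simp
    next
      assume "a = hmap n"
      then have "dom c = Omega n - {n + 1 - i}"
        using dom_eq_if_dom_pcomp_hmap[OF dom_sub(2)] gen_comp.prems by simp
      moreover have "n + 1 - i \<in> Omega n" "n + 1 - (n + 1 - i) = i"
        using gen_comp.prems(1) by (auto simp: Omega_def)
      ultimately show ?case
        using gen_comp.IH(2)[of "n + 1 - i"] by auto
    qed
  qed
qed

lemma hmap_mem_generating_set:
  assumes "2 \<le> n" "hmap n \<in> AM n" "A \<subseteq> PMI n" "gen n A = AM n"
  shows "hmap n \<in> A"
proof -
  have "hmap n 1 = Some n" "pid n 1 = Some 1"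
    using assms(1) by (simp_all add: hmap_def pid_def Omega_def)
  with assms(1) have "hmap n \<noteq> pid n"
    by auto
  then show ?thesis
    using gen_full_dom[OF assms(3), of "hmap n"] assms(2,4) by simp
qed

lemma generating_set_corank1_witness:
  assumes "A \<subseteq> PMI n" "gen n A = AM n" "i \<in> Omega n"
  obtains a where "a \<in> A" "dom a = Omega n - {i} \<or> dom a = Omega n - {n + 1 - i}"
proof -
  have "opb n i i \<in> gen n A"
    using opb_AM[OF assms(3) assms(3)] assms(2) by simp
  then obtain a where "a \<in> A" "dom a = Omega n - {i} \<or> dom a = Omega n - {n + 1 - i}"
    using gen_corank1_dom[OF assms(1) _ assms(3), of "opb n i i"] by (auto simp: dom_opb)
  then show thesis
    by (rule that)
qed

lemma card_generating_set_minus_hmap: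
  assumes "A \<subseteq> AM n" "gen n A = AM n"
  shows "n div 2 \<le> card (A - {hmap n})"
proof -
  have PMI: "A \<subseteq> PMI n"
    using assms(1) by (auto simp: AM_def)
  have fin: "finite (A - {hmap n})"
    using finite_subset[OF assms(1) finite_AM] by simp
  \<comment> \<open>the point missing from \<open>dom a\<close>, folded into \<open>{1..n div 2}\<close>\<close>
  define g :: "(nat \<Rightarrow> nat option) \<Rightarrow> nat"
    where "g a = (let k = Min (Omega n - dom a) in min k (n + 1 - k))" for a
  have "{1..n div 2} \<subseteq> g ` (A - {hmap n})"
  proof
    fix i
    assume i: "i \<in> {1..n div 2}"
    then have i_range: "i \<in> Omega n" "n + 1 - i \<in> Omega n" "i \<le> n + 1 - i" "n + 1 - (n + 1 - i) = i"
      by (auto simp: Omega_def)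
    obtain a where "a \<in> A" "dom a = Omega n - {i} \<or> dom a = Omega n - {n + 1 - i}"
      using generating_set_corank1_witness[OF PMI assms(2) i_range(1)] by blast
    then obtain k where a: "a \<in> A" "dom a = Omega n - {k}" and k: "k \<in> {i, n + 1 - i}"
      by blast
    have "k \<in> Omega n"
      using k i_range by auto
    then have "Omega n - dom a = {k}"
      using a(2) by auto
    then have "g a = i"
      using k i_range by (auto simp: g_def)
    moreover have "a \<noteq> hmap n"
      using a(2) \<open>k \<in> Omega n\<close> dom_hmap[of n] by auto
    ultimately show "i \<in> g ` (A - {hmap n})"
      using a(1) by (intro image_eqI[where x = a]) simp_all
  qed
  then have "card {1..n div 2} \<le> card (g ` (A - {hmap n}))"
    using fin by (intro card_mono) simp_all
  also have "\<dots> \<le> card (A - {hmap n})"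
    using fin by (rule card_image_le)
  finally show ?thesis
    by simp
qed

lemma card_generating_set_ge:
  assumes "2 \<le> n" "hmap n \<in> AM n" "A \<subseteq> AM n" "gen n A = AM n"
  shows "n div 2 + 1 \<le> card A"
proof -
  have "A \<subseteq> PMI n"
    using assms(3) by (auto simp: AM_def)
  then have h: "hmap n \<in> A"
    by (rule hmap_mem_generating_set[OF assms(1,2) _ assms(4)])
  have fin: "finite A"
    using assms(3) finite_AM by (rule finite_subset)
  have "card A = Suc (card (A - {hmap n}))"
    by (rule card.remove[OF fin h])
  then show ?thesis
    using card_generating_set_minus_hmap[OF assms(3,4)] by simp
qed

lemma rank_eqI:
  assumes "A \<subseteq> M" "finite A" "gen n A = M" "\<And>B. B \<subseteq> M \<Longrightarrow> gen n B = M \<Longrightarrow> card A \<le> card B"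
  shows "rank n M = card A"
  unfolding rank_def
proof (rule Least_equality)
  show "\<exists>B. B \<subseteq> M \<and> finite B \<and> card B = card A \<and> gen n B = M"
    using assms(1-3) by (intro exI[of _ A]) simp
  fix k
  assume "\<exists>B. B \<subseteq> M \<and> finite B \<and> card B = k \<and> gen n B = M"
  then obtain B where B: "B \<subseteq> M" "card B = k" "gen n B = M"
    by blast
  show "card A \<le> k"
    using assms(4)[OF B(1,3)] B(2) by simp
qed

theorem theorem5p4:
  fixes n :: nat
  assumes "n mod 4 = 0" and "0 < n"
  defines "S \<equiv> {hmap n} \<union> {xgen n i | i. n div 2 + 3 \<le> i \<and> i \<le> n}
               \<union> {lprod n (map (\<lambda>j. xgen n (2 * j)) (rev [2..<n div 4 + 2])),
                  lprod n (map (\<lambda>j. xgen n (2 * j + 1)) (rev [1..<n div 4 + 1]))}"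
  shows "S \<subseteq> AM n \<and> gen n S = AM n
         \<and> (\<forall>A. A \<subseteq> AM n \<and> gen n A = AM n \<longrightarrow> card S \<le> card A)
         \<and> card S = n div 2 + 1 \<and> rank n (AM n) = n div 2 + 1"
proof -
  have S: "S = generators n"
    unfolding S_def using assms(1,2) by (rule generators_eq)
  have card_S: "card S = n div 2 + 1"
    unfolding S using assms(1,2) by (rule card_generators)
  have minimal: "card S \<le> card A" if "A \<subseteq> AM n" "gen n A = AM n" for A
    unfolding card_S using assms(1,2) that by (intro card_generating_set_ge hmap_AM) auto
  have "S \<subseteq> AM n" "gen n S = AM n"
    unfolding S using assms(1,2) by (simp_all add: generators_subset_AM gen_generators)
  moreover have "rank n (AM n) = card S"
    using \<open>S \<subseteq> AM n\<close> finite_subset[OF \<open>S \<subseteq> AM n\<close> finite_AM] \<open>gen n S = AM n\<close> minimal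
    by (rule rank_eqI)
  ultimately show ?thesis
    using card_S minimal by simp
qed

end
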